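(* Consider the system \[ \begin{aligned} \dot S_h(t)&=\beta_h-C_{vh}\frac{I_v(t)}{N_v(t)}S_h(t)-\mu_hS_h(t),\\ \dot I_h(t)&=C_{vh}\frac{I_v(t-\tau)}{N_v(t-\tau)}S_h(t-\tau)-\mu_hI_h(t),\\ \dot S_v(t)&=\beta_v-C_{hv}I_h(t)S_v(t)-\mu_vS_v(t),\\ \dot I_v(t)&=C_{hv}I_h(t)S_v(t)-\mu_vI_v(t), \end{aligned} \] with $N_v=S_v+I_v$, positive parameters $\beta_h,\beta_v,\mu_h,\mu_v,C_{vh},C_{hv}$ and $\tau\ge 0$. Let $R_0=\sqrt{C_{vh}C_{hv}\beta_h/(\mu_h^2\mu_v)}$, $S_v^0=\beta_v/\mu_v$, and, when $R_0>1$, let $E^*=(S_h^*,I_h^*,S_v^*,I_v^* )^T$ be the unique equilibrium with all components positive. Suppose $R_0>1$, $\theta\in(0,1)$, and let $(S_h(t),I_h(t),S_v(t),I_v(t))$ be the solution through an initial function $\varphi\in D$ satisfying $\limsup_{t\to\infty}I_h(t)\le\theta I_h^*$. Then \[ \liminf_{t\to\infty}S_v(t)\ge \bar S_v:=\frac{\beta_v}{\theta C_{hv}I_h^*+\mu_v}>S_v^*,\qquad \liminf_{t\to\infty}S_h(t)\ge \bar S_h:=\frac{\beta_h}{C_{vh}\left(1-\frac{\bar S_v}{S_v^0}\right)+\mu_h}>S_h^*. \]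
   Context: $C_+=\{\varphi\in C([-\tau,0],\mathbb{R}_+^4):\varphi_3(\theta)+\varphi_4(\theta)>0\ \forall\theta\in[-\tau,0]\}$ with the sup-norm, and $D=\{\varphi\in C_+:\varphi_2(0)>0\}$. The solution through $\varphi$ equals $\varphi$ on $[-\tau,0]$. *)

theory Defs
  imports "HOL-Analysis.Analysis"
begin

definition in_D :: "real \<Rightarrow> (real \<Rightarrow> real) \<Rightarrow> (real \<Rightarrow> real) \<Rightarrow> (real \<Rightarrow> real) \<Rightarrow> (real \<Rightarrow> real) \<Rightarrow> bool" where
  "in_D tau p1 p2 p3 p4 \<longleftrightarrow>
     continuous_on {-tau..0} p1 \<and> continuous_on {-tau..0} p2 \<and>
     continuous_on {-tau..0} p3 \<and> continuous_on {-tau..0} p4 \<and>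
     (\<forall>s\<in>{-tau..0}. p1 s \<ge> 0 \<and> p2 s \<ge> 0 \<and> p3 s \<ge> 0 \<and> p4 s \<ge> 0 \<and> p3 s + p4 s > 0) \<and>
     p2 0 > 0"

definition is_solution ::
  "real \<Rightarrow> real \<Rightarrow> real \<Rightarrow> real \<Rightarrow> real \<Rightarrow> real \<Rightarrow> real \<Rightarrow>
   (real \<Rightarrow> real) \<Rightarrow> (real \<Rightarrow> real) \<Rightarrow> (real \<Rightarrow> real) \<Rightarrow> (real \<Rightarrow> real) \<Rightarrow>
   (real \<Rightarrow> real) \<Rightarrow> (real \<Rightarrow> real) \<Rightarrow> (real \<Rightarrow> real) \<Rightarrow> (real \<Rightarrow> real) \<Rightarrow> bool" where
  "is_solution bh bv muh muv Cvh Chv tau p1 p2 p3 p4 Sh Ih Sv Iv \<longleftrightarrow>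
     continuous_on {-tau..} Sh \<and> continuous_on {-tau..} Ih \<and>
     continuous_on {-tau..} Sv \<and> continuous_on {-tau..} Iv \<and>
     (\<forall>s\<in>{-tau..0}. Sh s = p1 s \<and> Ih s = p2 s \<and> Sv s = p3 s \<and> Iv s = p4 s) \<and>
     (\<forall>t\<ge>0.
        (Sh has_real_derivative
           (bh - Cvh * (Iv t / (Sv t + Iv t)) * Sh t - muh * Sh t)) (at t within {0..}) \<and>
        (Ih has_real_derivative
           (Cvh * (Iv (t - tau) / (Sv (t - tau) + Iv (t - tau))) * Sh (t - tau) - muh * Ih t))
           (at t within {0..}) \<and>
        (Sv has_real_derivative (bv - Chv * Ih t * Sv t - muv * Sv t)) (at t within {0..}) \<and>
        (Iv has_real_derivative (Chv * Ih t * Sv t - muv * Iv t)) (at t within {0..}))"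

definition R0 :: "real \<Rightarrow> real \<Rightarrow> real \<Rightarrow> real \<Rightarrow> real \<Rightarrow> real" where
  "R0 bh muh muv Cvh Chv = sqrt (Cvh * Chv * bh / (muh\<^sup>2 * muv))"

text \<open>Equilibrium of the system (for tau the delay does not affect equilibria).\<close>
definition is_equilibrium :: "real \<Rightarrow> real \<Rightarrow> real \<Rightarrow> real \<Rightarrow> real \<Rightarrow> real \<Rightarrow>
   real \<Rightarrow> real \<Rightarrow> real \<Rightarrow> real \<Rightarrow> bool" where
  "is_equilibrium bh bv muh muv Cvh Chv Sh Ih Sv Iv \<longleftrightarrow>
     Sv + Iv \<noteq> 0 \<and>
     bh - Cvh * (Iv / (Sv + Iv)) * Sh - muh * Sh = 0 \<and>
     Cvh * (Iv / (Sv + Iv)) * Sh - muh * Ih = 0 \<and>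
     bv - Chv * Ih * Sv - muv * Sv = 0 \<and>
     Chv * Ih * Sv - muv * Iv = 0"

end

(*
  For large t each susceptible class x satisfies, for every eps > 0, a linear differential
  inequality x' >= beta - (alpha + eps) x, and a barrier argument turns this into
  liminf x >= beta / alpha.  For S_v this uses I_h <= theta I_h* + eps eventually, giving
  alpha = theta C_hv I_h* + mu_v.  The total vector population N_v solves
  N_v' = beta_v - mu_v N_v, hence tends to S_v^0 = beta_v / mu_v; so eventually
  I_v / N_v = 1 - S_v / N_v <= 1 - bar S_v / S_v^0 + eps, which gives the inequality for S_h
  with alpha = C_vh (1 - bar S_v / S_v^0) + mu_h.  The comparison with E* comes from the
  explicit equilibrium values S_v* = beta_v / (C_hv I_h* + mu_v) and
  S_h* = beta_h / (C_vh (1 - S_v* / S_v^0) + mu_h), together with theta < 1.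
*)
theory Submission
  imports Defs
begin

lemma ereal_le_Liminf_iff:
  fixes f :: "'a \<Rightarrow> real"
  shows "ereal L \<le> Liminf F (\<lambda>x. ereal (f x)) \<longleftrightarrow> (\<forall>c<L. \<forall>\<^sub>F x in F. c < f x)"
proof
  assume le: "ereal L \<le> Liminf F (\<lambda>x. ereal (f x))"
  show "\<forall>c<L. \<forall>\<^sub>F x in F. c < f x"
  proof (intro allI impI)
    fix c assume "c < L"
    then have "\<forall>\<^sub>F x in F. ereal c < ereal (f x)"
      using le[unfolded le_Liminf_iff, rule_format, of "ereal c"] by simp
    then show "\<forall>\<^sub>F x in F. c < f x"
      by simp
  qed
next
  assume below: "\<forall>c<L. \<forall>\<^sub>F x in F. c < f x"
  show "ereal L \<le> Liminf F (\<lambda>x. ereal (f x))"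
    unfolding le_Liminf_iff
  proof (intro allI impI)
    fix y assume "y < ereal L"
    then obtain r where r: "y < ereal r" "r < L"
      using ereal_dense2 by fastforce
    from below r(2) have "\<forall>\<^sub>F x in F. r < f x" by blast
    then show "\<forall>\<^sub>F x in F. y < ereal (f x)"
      by eventually_elim (use r(1) in \<open>auto intro: less_trans\<close>)
  qed
qed

lemma ge_level_invariant_if_deriv_pos_at_level:
  fixes f f' :: "real \<Rightarrow> real"
  assumes cont: "continuous_on {T..} f"
    and deriv: "\<And>t. T \<le> t \<Longrightarrow> (f has_real_derivative f' t) (at t within {T..})"
    and crossing: "\<And>t. T \<le> t \<Longrightarrow> f t = c \<Longrightarrow> 0 < f' t"
    and start: "c \<le> f T"
    and "T \<le> s"
  shows "c \<le> f s"
proof (rule ccontr)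
  \<comment> \<open>The last time \<open>t0 \<le> s\<close> with \<open>c \<le> f t0\<close> is a crossing time; there \<open>f' t0 > 0\<close> pushes \<open>f\<close> above \<open>c\<close> just after \<open>t0\<close>.\<close>
  assume "\<not> c \<le> f s"
  with start \<open>T \<le> s\<close> have fs: "f s < c" and "T < s"
    by (auto simp: order.order_iff_strict)
  have cont_Ts: "continuous_on {T..s} f"
    using cont by (rule continuous_on_subset) auto
  define S where "S = {T..s} \<inter> f -` {c..}"
  define t0 where "t0 = Sup S"
  have "closed S"
    unfolding S_def by (rule continuous_closed_preimage[OF cont_Ts]) auto
  moreover have "T \<in> S" and bdd: "bdd_above S"
    using start \<open>T < s\<close> unfolding S_def by (auto intro: bdd_aboveI[of _ s])
  ultimately have "t0 \<in> S"
    unfolding t0_def by (intro closed_contains_Sup) auto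
  have last: "x \<le> t0" if "x \<in> S" for x
    unfolding t0_def using that bdd by (rule cSup_upper)
  from \<open>t0 \<in> S\<close> fs have t0: "T \<le> t0" "t0 < s" "c \<le> f t0"
    unfolding S_def by (auto simp: order.order_iff_strict)
  obtain x where x: "t0 \<le> x" "x \<le> s" "f x = c"
    using IVT2'[of f s c t0] fs t0 continuous_on_subset[OF cont_Ts, of "{t0..s}"] by auto
  with t0 have "x \<in> S" unfolding S_def by auto
  with x have ft0: "f t0 = c" using last by force
  obtain d where d: "0 < d" "\<And>h. 0 < h \<Longrightarrow> t0 + h \<in> {T..} \<Longrightarrow> h < d \<Longrightarrow> f t0 < f (t0 + h)"
    using has_real_derivative_pos_inc_right[OF deriv[OF t0(1)] crossing[OF t0(1) ft0]] by blast
  define h where "h = min (d / 2) (s - t0)"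
  have h: "0 < h" "h < d" "t0 + h \<le> s"
    using d t0 unfolding h_def by auto
  with d(2)[of h] ft0 t0 have "t0 + h \<in> S"
    unfolding S_def by auto
  with last h show False by force
qed

lemma eventually_ge_if_deriv_ge_below_level:
  fixes f f' :: "real \<Rightarrow> real"
  assumes cont: "continuous_on {T..} f"
    and deriv: "\<And>t. T \<le> t \<Longrightarrow> (f has_real_derivative f' t) (at t within {T..})"
    and "0 < \<eta>"
    and below: "\<And>t. T \<le> t \<Longrightarrow> f t \<le> c \<Longrightarrow> \<eta> \<le> f' t"
  shows "\<forall>\<^sub>F t in at_top. c \<le> f t"
proof (cases "\<exists>t1\<ge>T. c \<le> f t1")
  case True
  then obtain t1 where t1: "T \<le> t1" "c \<le> f t1" by blast
  have "c \<le> f t" if "t1 \<le> t" for t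
  proof (rule ge_level_invariant_if_deriv_pos_at_level[of t1 f f'])
    show "continuous_on {t1..} f"
      using cont by (rule continuous_on_subset) (use t1 in auto)
    show "(f has_real_derivative f' t) (at t within {t1..})" if "t1 \<le> t" for t
      by (rule DERIV_subset[OF deriv]) (use that t1 in auto)
    show "0 < f' s" if "t1 \<le> s" "f s = c" for s
    proof -
      have "\<eta> \<le> f' s"
        using that t1 by (intro below) auto
      with \<open>0 < \<eta>\<close> show ?thesis by linarith
    qed
  qed (use t1 that in auto)
  then show ?thesis
    unfolding eventually_at_top_linorder by blast
next
  case False
  have lt: "f t < c" if "T \<le> t" for t
  proof (rule ccontr)
    assume "\<not> f t < c"
    then have "c \<le> f t"
      by simp
    with False that show False
      by blast
  qed
  \<comment> \<open>Below the level \<open>c\<close> the function grows at rate at least \<open>\<eta>\<close>, so it would reach \<open>c\<close> by time \<open>b\<close>.\<close>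
  define b where "b = T + (c - f T) / \<eta> + 1"
  have "T \<le> b"
    using lt[of T] \<open>0 < \<eta>\<close> unfolding b_def by simp
  have "(f has_derivative (\<lambda>h. f' x * h)) (at x within {T..b})" if "T \<le> x" "x \<le> b" for x
    using DERIV_subset[OF deriv[OF that(1)], of "{T..b}"]
    by (auto simp: has_field_derivative_def)
  then have "\<exists>x\<in>{T..b}. f b - f T = f' x * (b - T)"
    by (rule mvt_very_simple[OF \<open>T \<le> b\<close>])
  then obtain x where x: "T \<le> x" "x \<le> b" "f b - f T = f' x * (b - T)"
    by auto
  have "\<eta> * (b - T) \<le> f' x * (b - T)"
    using below[OF x(1) less_imp_le[OF lt[OF x(1)]]] \<open>T \<le> b\<close> by (intro mult_right_mono) auto
  moreover have "\<eta> * (b - T) = c - f T + \<eta>"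
    unfolding b_def using \<open>0 < \<eta>\<close> by (simp add: field_simps)
  ultimately show ?thesis
    using x(3) lt[OF \<open>T \<le> b\<close>] \<open>0 < \<eta>\<close> by linarith
qed

lemma Liminf_ge_if_deriv_pos_below:
  fixes f f' :: "real \<Rightarrow> real"
  assumes cont: "continuous_on {T..} f"
    and deriv: "\<And>t. T \<le> t \<Longrightarrow> (f has_real_derivative f' t) (at t within {T..})"
    and below: "\<And>c. c < L \<Longrightarrow> \<exists>\<eta>>0. \<forall>\<^sub>F t in at_top. f t \<le> c \<longrightarrow> \<eta> \<le> f' t"
  shows "ereal L \<le> Liminf at_top (\<lambda>t. ereal (f t))"
proof -
  have reach: "\<forall>\<^sub>F t in at_top. c \<le> f t" if c: "c < L" for c
  proof -
    obtain \<eta> where "0 < \<eta>" and "\<forall>\<^sub>F t in at_top. f t \<le> c \<longrightarrow> \<eta> \<le> f' t"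
      using below[OF c] by blast
    then obtain T' where T': "\<And>t. T' \<le> t \<Longrightarrow> f t \<le> c \<Longrightarrow> \<eta> \<le> f' t"
      unfolding eventually_at_top_linorder by blast
    define T'' where "T'' = max T T'"
    show ?thesis
    proof (rule eventually_ge_if_deriv_ge_below_level[of T'' f f' \<eta>])
      show "continuous_on {T''..} f"
        using cont by (rule continuous_on_subset) (auto simp: T''_def)
      show "(f has_real_derivative f' t) (at t within {T''..})" if "T'' \<le> t" for t
        by (rule DERIV_subset[OF deriv]) (use that in \<open>auto simp: T''_def\<close>)
    qed (use \<open>0 < \<eta>\<close> T' in \<open>auto simp: T''_def\<close>)
  qed
  have "\<forall>\<^sub>F t in at_top. c < f t" if "c < L" for c
    using reach[of "(c + L) / 2"] that by (auto elim: eventually_mono)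
  then show ?thesis
    by (simp add: ereal_le_Liminf_iff)
qed

lemma Liminf_ge_if_deriv_ge_linear:
  fixes f f' :: "real \<Rightarrow> real"
  assumes cont: "continuous_on {T..} f"
    and deriv: "\<And>t. T \<le> t \<Longrightarrow> (f has_real_derivative f' t) (at t within {T..})"
    and "0 < \<alpha>"
    and bound: "\<And>\<epsilon>. 0 < \<epsilon> \<Longrightarrow> \<forall>\<^sub>F t in at_top. \<beta> - (\<alpha> + \<epsilon>) * f t \<le> f' t"
  shows "ereal (\<beta> / \<alpha>) \<le> Liminf at_top (\<lambda>t. ereal (f t))"
proof (rule Liminf_ge_if_deriv_pos_below[OF cont deriv])
  fix c assume "c < \<beta> / \<alpha>"
  then have gap: "0 < \<beta> - \<alpha> * c"
    using \<open>0 < \<alpha>\<close> by (simp add: field_simps)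
  define \<epsilon> where "\<epsilon> = (\<beta> - \<alpha> * c) / (2 * (\<bar>c\<bar> + 1))"
  have "0 < \<epsilon>"
    unfolding \<epsilon>_def using gap by simp
  have "\<epsilon> * c \<le> \<epsilon> * (\<bar>c\<bar> + 1)"
    using \<open>0 < \<epsilon>\<close> by (intro mult_left_mono) auto
  also have "\<dots> = (\<beta> - \<alpha> * c) / 2"
    unfolding \<epsilon>_def by (simp add: field_simps add_pos_nonneg)
  finally have small: "\<epsilon> * c \<le> (\<beta> - \<alpha> * c) / 2" .
  have "\<forall>\<^sub>F t in at_top. f t \<le> c \<longrightarrow> (\<beta> - \<alpha> * c) / 2 \<le> f' t"
    using bound[OF \<open>0 < \<epsilon>\<close>]
  proof eventually_elim
    case (elim t)
    show ?case
    proof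
      assume "f t \<le> c"
      then have "(\<alpha> + \<epsilon>) * f t \<le> (\<alpha> + \<epsilon>) * c"
        using \<open>0 < \<alpha>\<close> \<open>0 < \<epsilon>\<close> by (intro mult_left_mono) auto
      with elim small show "(\<beta> - \<alpha> * c) / 2 \<le> f' t"
        by (simp add: algebra_simps)
    qed
  qed
  with gap show "\<exists>\<eta>>0. \<forall>\<^sub>F t in at_top. f t \<le> c \<longrightarrow> \<eta> \<le> f' t"
    by (intro exI[of _ "(\<beta> - \<alpha> * c) / 2"]) auto
qed

lemma tendsto_linear_ode_equilibrium:
  fixes f :: "real \<Rightarrow> real"
  assumes cont: "continuous_on {T..} f"
    and deriv: "\<And>t. T \<le> t \<Longrightarrow> (f has_real_derivative \<beta> - \<alpha> * f t) (at t within {T..})"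
    and "0 < \<alpha>"
  shows "(f \<longlongrightarrow> \<beta> / \<alpha>) at_top"
proof -
  have lower: "ereal (\<gamma> / \<alpha>) \<le> Liminf at_top (\<lambda>t. ereal (g t))"
    if "continuous_on {T..} g"
      and "\<And>t. T \<le> t \<Longrightarrow> (g has_real_derivative \<gamma> - \<alpha> * g t) (at t within {T..})"
    for g \<gamma>
  proof (rule Liminf_ge_if_deriv_pos_below[OF that])
    fix c assume "c < \<gamma> / \<alpha>"
    then have "0 < \<gamma> - \<alpha> * c"
      using \<open>0 < \<alpha>\<close> by (simp add: field_simps)
    moreover have "\<gamma> - \<alpha> * c \<le> \<gamma> - \<alpha> * g t" if "g t \<le> c" for t
      using that \<open>0 < \<alpha>\<close> by simp
    ultimately show "\<exists>\<eta>>0. \<forall>\<^sub>F t in at_top. g t \<le> c \<longrightarrow> \<eta> \<le> \<gamma> - \<alpha> * g t"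
      by (intro exI[of _ "\<gamma> - \<alpha> * c"]) auto
  qed
  have "ereal (\<beta> / \<alpha>) \<le> Liminf at_top (\<lambda>t. ereal (f t))"
    using cont deriv by (rule lower)
  then have eventually_greater: "\<forall>\<^sub>F t in at_top. y < f t" if "y < \<beta> / \<alpha>" for y
    using that by (simp add: ereal_le_Liminf_iff)
  have "ereal (- \<beta> / \<alpha>) \<le> Liminf at_top (\<lambda>t. ereal (- f t))"
  proof (rule lower)
    show "continuous_on {T..} (\<lambda>t. - f t)"
      using cont by (rule continuous_on_minus)
    show "((\<lambda>t. - f t) has_real_derivative - \<beta> - \<alpha> * - f t) (at t within {T..})" if "T \<le> t" for t
      using DERIV_minus[OF deriv[OF that]] by simp
  qed
  then have neg: "\<forall>c < - (\<beta> / \<alpha>). \<forall>\<^sub>F t in at_top. c < - f t"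
    by (simp add: ereal_le_Liminf_iff)
  have eventually_less: "\<forall>\<^sub>F t in at_top. f t < z" if "\<beta> / \<alpha> < z" for z
    using neg[rule_format, of "- z"] that by simp
  from eventually_greater eventually_less show ?thesis
    by (rule order_tendstoI)
qed

lemma equilibrium_susceptibles:
  assumes "is_equilibrium bh bv muh muv Cvh Chv Shs Ihs Svs Ivs"
    and "0 < bv" "0 < muv" "0 < muh" "0 \<le> Cvh" "0 \<le> Chv" "0 \<le> Ihs"
  shows "Svs = bv / (Chv * Ihs + muv)"
    and "Shs = bh / (Cvh * (1 - Svs / (bv / muv)) + muh)"
proof -
  from assms(1) have eq: "Svs + Ivs \<noteq> 0"
      "bh - Cvh * (Ivs / (Svs + Ivs)) * Shs - muh * Shs = 0"
      "bv - Chv * Ihs * Svs - muv * Svs = 0"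
      "Chv * Ihs * Svs - muv * Ivs = 0"
    unfolding is_equilibrium_def by auto
  have "0 < Chv * Ihs + muv"
    using assms by (simp add: add_nonneg_pos)
  with eq(3) show Svs: "Svs = bv / (Chv * Ihs + muv)"
    by (simp add: field_simps)
  from eq(3,4) have total: "Svs + Ivs = bv / muv"
    using assms by (simp add: field_simps)
  then have "Ivs = bv / muv - Svs"
    by simp
  then have fraction: "Ivs / (Svs + Ivs) = 1 - Svs / (bv / muv)"
    unfolding total using assms by (simp add: field_simps)
  have "Svs \<le> bv / muv"
    unfolding Svs using assms by (intro divide_left_mono mult_pos_pos add_nonneg_pos) auto
  then have "0 \<le> 1 - Svs / (bv / muv)"
    using assms by (simp add: field_simps)
  then have "0 < Cvh * (1 - Svs / (bv / muv)) + muh"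
    using assms by (intro add_nonneg_pos mult_nonneg_nonneg)
  moreover from eq(2) have "Shs * (Cvh * (1 - Svs / (bv / muv)) + muh) = bh"
    unfolding fraction by (simp add: algebra_simps)
  ultimately show "Shs = bh / (Cvh * (1 - Svs / (bv / muv)) + muh)"
    by (simp add: eq_divide_eq)
qed

locale host_vector_solution =
  fixes bh bv muh muv Cvh Chv tau :: real
    and p1 p2 p3 p4 Sh Ih Sv Iv :: "real \<Rightarrow> real"
  assumes params_pos: "0 < bh" "0 < bv" "0 < muh" "0 < muv" "0 < Cvh" "0 < Chv"
    and delay_nonneg: "0 \<le> tau"
    and init: "in_D tau p1 p2 p3 p4"
    and sol: "is_solution bh bv muh muv Cvh Chv tau p1 p2 p3 p4 Sh Ih Sv Iv"
begin

lemma continuous_on_solution: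
  "continuous_on {0..} Sh" "continuous_on {0..} Sv" "continuous_on {0..} Iv"
proof -
  have "{0..} \<subseteq> {-tau..}"
    using delay_nonneg by auto
  then show "continuous_on {0..} Sh" "continuous_on {0..} Sv" "continuous_on {0..} Iv"
    using sol unfolding is_solution_def by (meson continuous_on_subset)+
qed

lemma
  assumes "0 \<le> t"
  shows Sh_deriv: "(Sh has_real_derivative bh - Cvh * (Iv t / (Sv t + Iv t)) * Sh t - muh * Sh t)
      (at t within {0..})"
    and Sv_deriv: "(Sv has_real_derivative bv - Chv * Ih t * Sv t - muv * Sv t) (at t within {0..})"
    and Iv_deriv: "(Iv has_real_derivative Chv * Ih t * Sv t - muv * Iv t) (at t within {0..})"
  using sol assms unfolding is_solution_def by simp_all

lemma total_vector_deriv: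
  "0 \<le> t \<Longrightarrow>
    ((\<lambda>t. Sv t + Iv t) has_real_derivative bv - muv * (Sv t + Iv t)) (at t within {0..})"
  using DERIV_add[OF Sv_deriv Iv_deriv] by (simp add: algebra_simps)

lemma initial_nonneg: "0 \<le> Sh 0" "0 \<le> Sv 0"
  using init sol delay_nonneg unfolding in_D_def is_solution_def by auto

lemma Sh_nonneg: "0 \<le> t \<Longrightarrow> 0 \<le> Sh t"
  by (rule ge_level_invariant_if_deriv_pos_at_level[OF continuous_on_solution(1) Sh_deriv])
    (use params_pos initial_nonneg in auto)

lemma Sv_nonneg: "0 \<le> t \<Longrightarrow> 0 \<le> Sv t"
  by (rule ge_level_invariant_if_deriv_pos_at_level[OF continuous_on_solution(2) Sv_deriv])
    (use params_pos initial_nonneg in auto)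

lemma total_vector_tendsto: "((\<lambda>t. Sv t + Iv t) \<longlongrightarrow> bv / muv) at_top"
  using continuous_on_add[OF continuous_on_solution(2,3)] total_vector_deriv params_pos(4)
  by (rule tendsto_linear_ode_equilibrium)

lemma Liminf_Sv_ge:
  assumes "0 \<le> I" and Limsup_Ih: "Limsup at_top (\<lambda>t. ereal (Ih t)) \<le> ereal I"
  shows "ereal (bv / (Chv * I + muv)) \<le> Liminf at_top (\<lambda>t. ereal (Sv t))"
proof (rule Liminf_ge_if_deriv_ge_linear[OF continuous_on_solution(2) Sv_deriv])
  show "0 < Chv * I + muv"
    using assms params_pos by (simp add: add_nonneg_pos)
  fix \<epsilon> :: real assume "0 < \<epsilon>"
  with Limsup_Ih have "Limsup at_top (\<lambda>t. ereal (Ih t)) < ereal (I + \<epsilon> / Chv)"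
    using params_pos by (auto intro: order.strict_trans1)
  then have "\<forall>\<^sub>F t in at_top. Ih t < I + \<epsilon> / Chv"
    by (auto dest: Limsup_lessD)
  moreover have "\<forall>\<^sub>F t in at_top. 0 \<le> Sv t"
    using eventually_ge_at_top[of 0] by eventually_elim (rule Sv_nonneg)
  ultimately show "\<forall>\<^sub>F t in at_top.
      bv - (Chv * I + muv + \<epsilon>) * Sv t \<le> bv - Chv * Ih t * Sv t - muv * Sv t"
  proof eventually_elim
    case (elim t)
    then have "Chv * Ih t \<le> Chv * I + \<epsilon>"
      using params_pos by (simp add: field_simps)
    then have "Chv * Ih t * Sv t \<le> (Chv * I + \<epsilon>) * Sv t"
      using elim by (intro mult_right_mono)
    then show ?case
      by (simp add: algebra_simps)
  qed
qed

lemma eventually_infected_vector_fraction_le: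
  assumes Liminf_Sv: "ereal L \<le> Liminf at_top (\<lambda>t. ereal (Sv t))" and "0 < \<delta>"
  shows "\<forall>\<^sub>F t in at_top. Iv t / (Sv t + Iv t) \<le> 1 - L / (bv / muv) + \<delta>"
proof -
  \<comment> \<open>Since \<open>Iv / (Sv + Iv) = 1 - Sv / (Sv + Iv)\<close>, it suffices that eventually \<open>Sv \<ge> r (Sv + Iv)\<close>.\<close>
  define r where "r = L / (bv / muv) - \<delta>"
  have "0 < bv / muv"
    using params_pos by simp
  then have total_pos: "\<forall>\<^sub>F t in at_top. 0 < Sv t + Iv t"
    by (rule order_tendstoD(1)[OF total_vector_tendsto])
  have "\<forall>\<^sub>F t in at_top. r * (Sv t + Iv t) \<le> Sv t"
  proof (cases "r \<le> 0")
    case True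
    from total_pos eventually_ge_at_top[of 0] show ?thesis
    proof eventually_elim
      case (elim t)
      then have "r * (Sv t + Iv t) \<le> 0"
        using True by (simp add: mult_nonpos_nonneg)
      also have "0 \<le> Sv t"
        using elim(2) by (rule Sv_nonneg)
      finally show ?case .
    qed
  next
    case False
    have "r * (bv / muv) = L - \<delta> * (bv / muv)"
      unfolding r_def using params_pos by (simp add: algebra_simps)
    moreover have "0 < \<delta> * (bv / muv)"
      using \<open>0 < \<delta>\<close> \<open>0 < bv / muv\<close> by (rule mult_pos_pos)
    ultimately have "bv / muv * r < L"
      by (simp add: mult.commute)
    then have "bv / muv < L / r"
      using False by (simp add: pos_less_divide_eq)
    then obtain z where z_above: "bv / muv < z" and "z < L / r"
      using dense by blast
    then have "z * r < L"
      using False by (simp add: pos_less_divide_eq)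
    then have z_below: "r * z < L"
      by (simp add: mult.commute)
    from order_tendstoD(2)[OF total_vector_tendsto z_above]
      and Liminf_Sv[unfolded ereal_le_Liminf_iff, rule_format, OF z_below]
    show ?thesis
    proof eventually_elim
      case (elim t)
      then have "r * (Sv t + Iv t) \<le> r * z"
        using False by simp
      with elim show ?case by linarith
    qed
  qed
  with total_pos show ?thesis
  proof eventually_elim
    case (elim t)
    then have "Iv t \<le> (1 - r) * (Sv t + Iv t)"
      by (simp add: algebra_simps)
    with elim(1) have "Iv t / (Sv t + Iv t) \<le> 1 - r"
      by (simp add: pos_divide_le_eq)
    then show ?case
      by (simp add: r_def)
  qed
qed

lemma Liminf_Sh_ge:
  assumes Liminf_Sv: "ereal L \<le> Liminf at_top (\<lambda>t. ereal (Sv t))" and "L \<le> bv / muv"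
  shows "ereal (bh / (Cvh * (1 - L / (bv / muv)) + muh)) \<le> Liminf at_top (\<lambda>t. ereal (Sh t))"
proof (rule Liminf_ge_if_deriv_ge_linear[OF continuous_on_solution(1) Sh_deriv])
  show "0 < Cvh * (1 - L / (bv / muv)) + muh"
    using assms params_pos by (intro add_nonneg_pos mult_nonneg_nonneg) (auto simp: field_simps)
  fix \<epsilon> :: real assume "0 < \<epsilon>"
  with params_pos have "\<forall>\<^sub>F t in at_top. Iv t / (Sv t + Iv t) \<le> 1 - L / (bv / muv) + \<epsilon> / Cvh"
    by (intro eventually_infected_vector_fraction_le[OF Liminf_Sv]) simp
  moreover have "\<forall>\<^sub>F t in at_top. 0 \<le> Sh t"
    using eventually_ge_at_top[of 0] by eventually_elim (rule Sh_nonneg)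
  ultimately show "\<forall>\<^sub>F t in at_top. bh - (Cvh * (1 - L / (bv / muv)) + muh + \<epsilon>) * Sh t
      \<le> bh - Cvh * (Iv t / (Sv t + Iv t)) * Sh t - muh * Sh t"
  proof eventually_elim
    case (elim t)
    then have "Cvh * (Iv t / (Sv t + Iv t)) \<le> Cvh * (1 - L / (bv / muv)) + \<epsilon>"
      using params_pos by (simp add: field_simps)
    then have "Cvh * (Iv t / (Sv t + Iv t)) * Sh t \<le> (Cvh * (1 - L / (bv / muv)) + \<epsilon>) * Sh t"
      using elim by (intro mult_right_mono)
    then show ?case
      by (simp add: algebra_simps)
  qed
qed

end

theorem lemma2:
  fixes bh bv muh muv Cvh Chv tau theta :: real
    and p1 p2 p3 p4 Sh Ih Sv Iv :: "real \<Rightarrow> real"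
    and Shs Ihs Svs Ivs :: real
  assumes pos: "bh > 0" "bv > 0" "muh > 0" "muv > 0" "Cvh > 0" "Chv > 0" "tau \<ge> 0"
    and R0: "R0 bh muh muv Cvh Chv > 1"
    and Estar: "is_equilibrium bh bv muh muv Cvh Chv Shs Ihs Svs Ivs"
               "Shs > 0" "Ihs > 0" "Svs > 0" "Ivs > 0"
    and theta: "0 < theta" "theta < 1"
    and init: "in_D tau p1 p2 p3 p4"
    and sol: "is_solution bh bv muh muv Cvh Chv tau p1 p2 p3 p4 Sh Ih Sv Iv"
    and lsup: "Limsup at_top (\<lambda>t. ereal (Ih t)) \<le> ereal (theta * Ihs)"
  shows "Liminf at_top (\<lambda>t. ereal (Sv t)) \<ge> ereal (bv / (theta * Chv * Ihs + muv))
       \<and> bv / (theta * Chv * Ihs + muv) > Svs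
       \<and> Liminf at_top (\<lambda>t. ereal (Sh t))
           \<ge> ereal (bh / (Cvh * (1 - (bv / (theta * Chv * Ihs + muv)) / (bv / muv)) + muh))
       \<and> bh / (Cvh * (1 - (bv / (theta * Chv * Ihs + muv)) / (bv / muv)) + muh) > Shs"
proof -
  interpret host_vector_solution bh bv muh muv Cvh Chv tau p1 p2 p3 p4 Sh Ih Sv Iv
    using pos init sol by unfold_locales
  define Sv_bar where "Sv_bar = bv / (theta * Chv * Ihs + muv)"
  have Svs: "Svs = bv / (Chv * Ihs + muv)"
    and Shs: "Shs = bh / (Cvh * (1 - Svs / (bv / muv)) + muh)"
    using equilibrium_susceptibles[OF Estar(1)] pos Estar by auto
  have "theta * Chv * Ihs < Chv * Ihs"
    using pos Estar theta by simp
  then have Svs_less: "Svs < Sv_bar"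
    unfolding Svs Sv_bar_def using pos Estar theta
    by (intro divide_strict_left_mono mult_pos_pos add_pos_pos) auto
  have "Sv_bar \<le> bv / muv"
    unfolding Sv_bar_def using pos Estar theta
    by (intro divide_left_mono mult_pos_pos add_pos_pos) auto
  have Liminf_Sv: "ereal Sv_bar \<le> Liminf at_top (\<lambda>t. ereal (Sv t))"
    unfolding Sv_bar_def using Liminf_Sv_ge[of "theta * Ihs"] lsup theta Estar
    by (simp add: mult.assoc mult.left_commute)
  define D_bar where "D_bar = Cvh * (1 - Sv_bar / (bv / muv)) + muh"
  have "0 < D_bar"
    unfolding D_bar_def using \<open>Sv_bar \<le> bv / muv\<close> pos
    by (intro add_nonneg_pos mult_nonneg_nonneg) (auto simp: field_simps)
  moreover have "D_bar < Cvh * (1 - Svs / (bv / muv)) + muh"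
    unfolding D_bar_def using Svs_less pos by (simp add: divide_strict_right_mono)
  ultimately have "Shs < bh / D_bar"
    unfolding Shs using pos by (intro divide_strict_left_mono mult_pos_pos) auto
  with Liminf_Sv Liminf_Sh_ge[OF Liminf_Sv \<open>Sv_bar \<le> bv / muv\<close>] Svs_less show ?thesis
    unfolding D_bar_def Sv_bar_def by blast
qed

end
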